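(* Let $A$ be a C*-algebra and $\mathcal H$ a countably generated Hilbert $A$-module with an orthogonal Hilbert basis $\{f_j : j\in\mathbb J\}$. Let $P,Q\in\mathrm{End}_A^*(\mathcal H)$ be orthogonal projections, $\mathcal M=P(\mathcal H)$, $\mathcal N=Q(\mathcal H)$, and suppose that $\{x_j=P(f_j) : j\in\mathbb J\}$ and $\{y_j=Q(f_j) : j\in\mathbb J\}$ are standard normalized tight frames for $\mathcal M$ and $\mathcal N$, respectively. Then the following are equivalent: (a) the frames $\{x_j\}$ and $\{y_j\}$ are similar; (b) they are unitarily equivalent; (c) $P=Q$ and $x_j=y_j$ for every $j\in\mathbb J$.
   Context: A (left) Hilbert $A$-module is a left $A$-module $\mathcal H$ with an $A$-valued inner product $\langle\cdot,\cdot\rangle$, $A$-linear in the first argument, with $\langle x,y\rangle=\langle y,x\rangle^*$, $\langle x,x\rangle\ge0$ and $=0$ only for $x=0$, complete in $\|x\|=\|\langle x,x\rangle\|^{1/2}$. Countably generated: some countable subset has norm-dense $A$-linear span. $\mathrm{End}_A^*(\mathcal H)$ is the C*-algebra of adjointable bounded $A$-linear operators on $\mathcal H$. A Hilbert basis is a set with norm-dense $A$-linear span such that an $A$-linear combination $\sum_{j\in S}a_jx_j$ is zero iff each $a_jx_j$ is zero, and $\|x_j\|=1$; orthogonal means $\langle f_i,f_j\rangle=0$ for $i\ne j$. A sequence $\{x_j\}$ is a normalized tight frame if $\langle x,x\rangle=\sum_j\langle x,x_j\rangle\langle x_j,x\rangle$ for all $x$; standard if this series converges in norm for all $x$. Frames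 $\{x_j\}$ of $\mathcal M$ and $\{y_j\}$ of $\mathcal N$ (same index set) are similar if there is an invertible adjointable bounded $A$-linear $T:\mathcal M\to\mathcal N$ with $T(x_j)=y_j$ for all $j$, and unitarily equivalent if $T$ can be chosen unitary (inner-product preserving and surjective). *)

theory Defs
  imports "HOL-Analysis.Analysis"
begin

text \<open>The underlying real Banach algebra structure of a C*-algebra is the type class
  structure of the carrier type; the complex scalar multiplication and the involution
  are explicit operations.  The algebra need not be unital.\<close>

record 'a cstar_ops =
  csc :: "complex \<Rightarrow> 'a \<Rightarrow> 'a"
  invol :: "'a \<Rightarrow> 'a"

definition cstar_algebra :: "('a::{real_normed_algebra, banach}) cstar_ops \<Rightarrow> bool" where
  "cstar_algebra A \<longleftrightarrow>
     (\<forall>c d a. csc A (c + d) a = csc A c a + csc A d a) \<and>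
     (\<forall>c a b. csc A c (a + b) = csc A c a + csc A c b) \<and>
     (\<forall>c d a. csc A (c * d) a = csc A c (csc A d a)) \<and>
     (\<forall>r a. csc A (complex_of_real r) a = scaleR r a) \<and>
     (\<forall>c a. norm (csc A c a) = cmod c * norm a) \<and>
     (\<forall>c a b. csc A c (a * b) = csc A c a * b) \<and>
     (\<forall>c a b. csc A c (a * b) = a * csc A c b) \<and>
     (\<forall>a b. invol A (a + b) = invol A a + invol A b) \<and>
     (\<forall>c a. invol A (csc A c a) = csc A (cnj c) (invol A a)) \<and>
     (\<forall>a b. invol A (a * b) = invol A b * invol A a) \<and>
     (\<forall>a. invol A (invol A a) = a) \<and>
     (\<forall>a. norm (invol A a * a) = (norm a)\<^sup>2)"

definition cstar_positive :: "('a::{real_normed_algebra, banach}) cstar_ops \<Rightarrow> 'a \<Rightarrow> bool" where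
  "cstar_positive A a \<longleftrightarrow> (\<exists>b. a = invol A b * b)"

text \<open>A left Hilbert A-module whose carrier is the whole type 'h.\<close>

record ('a, 'h) hmod_ops =
  hsc :: "complex \<Rightarrow> 'h \<Rightarrow> 'h"
  hact :: "'a \<Rightarrow> 'h \<Rightarrow> 'h"
  hinner :: "'h \<Rightarrow> 'h \<Rightarrow> 'a"

definition hnorm :: "('a::real_normed_vector, 'h) hmod_ops \<Rightarrow> 'h \<Rightarrow> real" where
  "hnorm H x = sqrt (norm (hinner H x x))"

definition hilbert_module ::
  "('a::{real_normed_algebra, banach}) cstar_ops \<Rightarrow> ('a, 'h::ab_group_add) hmod_ops \<Rightarrow> bool" where
  "hilbert_module A H \<longleftrightarrow>
     (\<forall>c d x. hsc H (c + d) x = hsc H c x + hsc H d x) \<and>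
     (\<forall>c x y. hsc H c (x + y) = hsc H c x + hsc H c y) \<and>
     (\<forall>c d x. hsc H (c * d) x = hsc H c (hsc H d x)) \<and>
     (\<forall>x. hsc H 1 x = x) \<and>
     (\<forall>a x y. hact H a (x + y) = hact H a x + hact H a y) \<and>
     (\<forall>a b x. hact H (a + b) x = hact H a x + hact H b x) \<and>
     (\<forall>a b x. hact H (a * b) x = hact H a (hact H b x)) \<and>
     (\<forall>c a x. hsc H c (hact H a x) = hact H (csc A c a) x) \<and>
     (\<forall>c a x. hact H a (hsc H c x) = hact H (csc A c a) x) \<and>
     (\<forall>x y z. hinner H (x + y) z = hinner H x z + hinner H y z) \<and>
     (\<forall>c x z. hinner H (hsc H c x) z = csc A c (hinner H x z)) \<and>
     (\<forall>a x z. hinner H (hact H a x) z = a * hinner H x z) \<and>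
     (\<forall>x y. hinner H x y = invol A (hinner H y x)) \<and>
     (\<forall>x. cstar_positive A (hinner H x x)) \<and>
     (\<forall>x. hinner H x x = 0 \<longrightarrow> x = 0) \<and>
     (\<forall>X::nat \<Rightarrow> 'h. (\<forall>e>0. \<exists>N. \<forall>m\<ge>N. \<forall>n\<ge>N. hnorm H (X m - X n) < e) \<longrightarrow>
         (\<exists>l. (\<lambda>n. hnorm H (X n - l)) \<longlonglongrightarrow> 0))"

definition hspan :: "('a::ab_group_add, 'h::ab_group_add) hmod_ops \<Rightarrow> 'h set \<Rightarrow> 'h set" where
  "hspan H S = {x. \<exists>F c. finite F \<and> F \<subseteq> S \<and> x = (\<Sum>s\<in>F. hact H (c s) s)}"

definition hdense :: "('a::real_normed_vector, 'h::ab_group_add) hmod_ops \<Rightarrow> 'h set \<Rightarrow> bool" where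
  "hdense H S \<longleftrightarrow> (\<forall>x. \<forall>e>0. \<exists>y\<in>S. hnorm H (x - y) < e)"

definition countably_generated ::
  "('a::{real_normed_algebra, banach}, 'h::ab_group_add) hmod_ops \<Rightarrow> bool" where
  "countably_generated H \<longleftrightarrow> (\<exists>G. countable G \<and> hdense H (hspan H G))"

definition hilbert_basis ::
  "('a::{real_normed_algebra, banach}, 'h::ab_group_add) hmod_ops \<Rightarrow> 'j set \<Rightarrow> ('j \<Rightarrow> 'h) \<Rightarrow> bool" where
  "hilbert_basis H J f \<longleftrightarrow>
     hdense H (hspan H (f ` J)) \<and>
     (\<forall>S a. finite S \<and> S \<subseteq> J \<longrightarrow>
        ((\<Sum>j\<in>S. hact H (a j) (f j)) = 0 \<longleftrightarrow> (\<forall>j\<in>S. hact H (a j) (f j) = 0))) \<and>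
     (\<forall>j\<in>J. hnorm H (f j) = 1)"

definition orthogonal_family ::
  "('a::{real_normed_algebra, banach}, 'h::ab_group_add) hmod_ops \<Rightarrow> 'j set \<Rightarrow> ('j \<Rightarrow> 'h) \<Rightarrow> bool" where
  "orthogonal_family H J f \<longleftrightarrow> (\<forall>i\<in>J. \<forall>j\<in>J. i \<noteq> j \<longrightarrow> hinner H (f i) (f j) = 0)"

definition adj_op ::
  "('a::{real_normed_algebra, banach}, 'h::ab_group_add) hmod_ops \<Rightarrow> 'h set \<Rightarrow> 'h set \<Rightarrow> ('h \<Rightarrow> 'h) \<Rightarrow> bool" where
  "adj_op H M N T \<longleftrightarrow>
     (\<forall>x\<in>M. T x \<in> N) \<and>
     (\<forall>x\<in>M. \<forall>y\<in>M. T (x + y) = T x + T y) \<and>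
     (\<forall>c. \<forall>x\<in>M. T (hsc H c x) = hsc H c (T x)) \<and>
     (\<forall>a. \<forall>x\<in>M. T (hact H a x) = hact H a (T x)) \<and>
     (\<exists>K. \<forall>x\<in>M. hnorm H (T x) \<le> K * hnorm H x) \<and>
     (\<exists>S. (\<forall>y\<in>N. S y \<in> M) \<and> (\<forall>x\<in>M. \<forall>y\<in>N. hinner H (T x) y = hinner H x (S y)))"

definition invertible_op ::
  "('a::{real_normed_algebra, banach}, 'h::ab_group_add) hmod_ops \<Rightarrow> 'h set \<Rightarrow> 'h set \<Rightarrow> ('h \<Rightarrow> 'h) \<Rightarrow> bool" where
  "invertible_op H M N T \<longleftrightarrow>
     adj_op H M N T \<and>
     (\<exists>S. adj_op H N M S \<and> (\<forall>x\<in>M. S (T x) = x) \<and> (\<forall>y\<in>N. T (S y) = y))"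

definition unitary_op ::
  "('a::{real_normed_algebra, banach}, 'h::ab_group_add) hmod_ops \<Rightarrow> 'h set \<Rightarrow> 'h set \<Rightarrow> ('h \<Rightarrow> 'h) \<Rightarrow> bool" where
  "unitary_op H M N T \<longleftrightarrow>
     adj_op H M N T \<and> T ` M = N \<and>
     (\<forall>x\<in>M. \<forall>y\<in>M. hinner H (T x) (T y) = hinner H x y)"

definition orth_projection ::
  "('a::{real_normed_algebra, banach}, 'h::ab_group_add) hmod_ops \<Rightarrow> ('h \<Rightarrow> 'h) \<Rightarrow> bool" where
  "orth_projection H P \<longleftrightarrow>
     adj_op H UNIV UNIV P \<and> (\<forall>x. P (P x) = P x) \<and>
     (\<forall>x y. hinner H (P x) y = hinner H x (P y))"

text \<open>Standard normalized tight frame for the submodule M: the reconstruction series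
  converges in norm (unconditionally, over the index set J).\<close>
definition std_nt_frame ::
  "('a::{real_normed_algebra, banach}, 'h::ab_group_add) hmod_ops \<Rightarrow> 'h set \<Rightarrow> 'j set \<Rightarrow> ('j \<Rightarrow> 'h) \<Rightarrow> bool" where
  "std_nt_frame H M J x \<longleftrightarrow>
     (\<forall>j\<in>J. x j \<in> M) \<and>
     (\<forall>z\<in>M. ((\<lambda>j. hinner H z (x j) * hinner H (x j) z) has_sum hinner H z z) J)"

definition similar_frames ::
  "('a::{real_normed_algebra, banach}, 'h::ab_group_add) hmod_ops \<Rightarrow> 'h set \<Rightarrow> 'h set \<Rightarrow> 'j set \<Rightarrow> ('j \<Rightarrow> 'h) \<Rightarrow> ('j \<Rightarrow> 'h) \<Rightarrow> bool" where
  "similar_frames H M N J x y \<longleftrightarrow> (\<exists>T. invertible_op H M N T \<and> (\<forall>j\<in>J. T (x j) = y j))"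

definition unitarily_equiv_frames ::
  "('a::{real_normed_algebra, banach}, 'h::ab_group_add) hmod_ops \<Rightarrow> 'h set \<Rightarrow> 'h set \<Rightarrow> 'j set \<Rightarrow> ('j \<Rightarrow> 'h) \<Rightarrow> ('j \<Rightarrow> 'h) \<Rightarrow> bool" where
  "unitarily_equiv_frames H M N J x y \<longleftrightarrow> (\<exists>T. unitary_op H M N T \<and> (\<forall>j\<in>J. T (x j) = y j))"

end

(* If an adjointable T maps P (f j) to Q (f j) for all j and S is its adjoint, then every z in
   range Q satisfies <z, f j> = <z, T (P (f j))> = <S z, P (f j)> = <S z, f j>; so z - S z is
   orthogonal to the dense span of the f j, and z = S z lies in range P. Applied to T and to its
   inverse, or to a unitary T (which preserves inner products), this gives range P = range Q and
   hence P = Q; the identity gives the converse.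

   The analytic input is that a vector orthogonal to a dense submodule vanishes, which rests on
   the C*-inequality ||b* b|| <= ||b* b + c* c||. Without spectral theory at hand, this is proved
   in the Banach algebra of bounded real-linear operators on A through the left regular
   representation: square roots come from the binomial series of sqrt (1 - x), and positivity of
   b* b follows the argument of Fukamiya and Kelley-Vaught. *)

theory Submission
  imports Defs "HOL-Computational_Algebra.Formal_Power_Series"
begin

section \<open>Bounded operators on a real Banach space\<close>

text \<open>A copy of \<open>'a \<Rightarrow>\<^sub>L 'a\<close> with composition as multiplication, which makes it a real
  Banach algebra; \<open>blinfun\<close> itself carries no algebra structure.\<close>

typedef (overloaded) 'a endo = "UNIV :: ('a::real_normed_vector \<Rightarrow>\<^sub>L 'a) set"
  morphisms blinfun_of_endo endo_of_blinfun by auto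

setup_lifting type_definition_endo

instantiation endo :: (real_normed_vector) real_normed_vector
begin
lift_definition norm_endo :: "'a endo \<Rightarrow> real" is norm .
lift_definition minus_endo :: "'a endo \<Rightarrow> 'a endo \<Rightarrow> 'a endo" is "(-)" .
lift_definition plus_endo :: "'a endo \<Rightarrow> 'a endo \<Rightarrow> 'a endo" is "(+)" .
lift_definition uminus_endo :: "'a endo \<Rightarrow> 'a endo" is "uminus" .
lift_definition zero_endo :: "'a endo" is "0" .
lift_definition scaleR_endo :: "real \<Rightarrow> 'a endo \<Rightarrow> 'a endo" is "scaleR" .
definition dist_endo :: "'a endo \<Rightarrow> 'a endo \<Rightarrow> real" where "dist_endo a b = norm (a - b)"
definition uniformity_endo :: "('a endo \<times> 'a endo) filter" where
  "uniformity_endo = (INF e\<in>{0 <..}. principal {(x, y). dist x y < e})"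
definition open_endo :: "'a endo set \<Rightarrow> bool" where
  "open_endo S = (\<forall>x\<in>S. \<forall>\<^sub>F (x', y) in uniformity. x' = x \<longrightarrow> y \<in> S)"
definition sgn_endo :: "'a endo \<Rightarrow> 'a endo" where "sgn_endo x = scaleR (inverse (norm x)) x"
instance
  apply standard
  unfolding dist_endo_def open_endo_def sgn_endo_def uniformity_endo_def
  apply (rule refl | (transfer, simp add: norm_triangle_ineq algebra_simps))+
  done
end

instantiation endo :: (real_normed_vector) "{times, one}"
begin
lift_definition times_endo :: "'a endo \<Rightarrow> 'a endo \<Rightarrow> 'a endo" is "blinfun_compose" .
lift_definition one_endo :: "'a endo" is "id_blinfun" .
instance ..
end

instance endo :: (real_normed_vector) real_normed_algebra
  apply standard
  apply (transfer; rule blinfun_eqI; simp add: blinfun.bilinear_simps)+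
  apply (transfer; simp add: norm_blinfun_compose)
  done

instance endo :: (real_normed_vector) monoid_mult
  apply standard
  apply (transfer; rule blinfun_eqI; simp)+
  done

lemma dist_endo_eq_dist_blinfun: "dist X Y = dist (blinfun_of_endo X) (blinfun_of_endo Y)"
  by (simp add: dist_endo_def dist_norm norm_endo.rep_eq minus_endo.rep_eq)

instance endo :: (banach) banach
proof
  fix X :: "nat \<Rightarrow> 'a endo"
  assume "Cauchy X"
  then have "Cauchy (\<lambda>n. blinfun_of_endo (X n))"
    unfolding Cauchy_def dist_endo_eq_dist_blinfun .
  then obtain L where "(\<lambda>n. blinfun_of_endo (X n)) \<longlonglongrightarrow> L"
    using Cauchy_convergent convergent_def by blast
  then have "X \<longlonglongrightarrow> endo_of_blinfun L"
    unfolding lim_sequentially dist_endo_eq_dist_blinfun endo_of_blinfun_inverse[OF UNIV_I] .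
  then show "convergent X" by (auto simp: convergent_def)
qed

definition endo_apply :: "'a::real_normed_vector endo \<Rightarrow> 'a \<Rightarrow> 'a" where
  "endo_apply X = blinfun_apply (blinfun_of_endo X)"

definition endo_of_fun :: "('a::real_normed_vector \<Rightarrow> 'a) \<Rightarrow> 'a endo" where
  "endo_of_fun f = endo_of_blinfun (Blinfun f)"

lemma endo_apply_add [simp]: "endo_apply (X + Y) z = endo_apply X z + endo_apply Y z"
  and endo_apply_diff [simp]: "endo_apply (X - Y) z = endo_apply X z - endo_apply Y z"
  and endo_apply_minus [simp]: "endo_apply (- X) z = - endo_apply X z"
  and endo_apply_zero [simp]: "endo_apply 0 z = 0"
  and endo_apply_scaleR [simp]: "endo_apply (r *\<^sub>R X) z = r *\<^sub>R endo_apply X z"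
  and endo_apply_mult [simp]: "endo_apply (X * Y) z = endo_apply X (endo_apply Y z)"
  and endo_apply_one [simp]: "endo_apply 1 z = z"
  unfolding endo_apply_def by (transfer; simp add: blinfun.bilinear_simps)+

lemma norm_endo_apply: "norm (endo_apply X z) \<le> norm X * norm z"
  unfolding endo_apply_def by transfer (rule norm_blinfun)

lemma norm_endo_bound: "0 \<le> b \<Longrightarrow> (\<And>z. norm (endo_apply X z) \<le> b * norm z) \<Longrightarrow> norm X \<le> b"
  unfolding endo_apply_def by transfer (rule norm_blinfun_bound)

lemma endo_eqI: "(\<And>z. endo_apply X z = endo_apply Y z) \<Longrightarrow> X = Y"
  unfolding endo_apply_def by transfer (rule blinfun_eqI)

lemma norm_one_endo: "norm (1::'a::real_normed_vector endo) \<le> 1"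
  by transfer (rule norm_blinfun_id_le)

lemma endo_apply_endo_of_fun: "bounded_linear f \<Longrightarrow> endo_apply (endo_of_fun f) = f"
  unfolding endo_apply_def endo_of_fun_def
  by (simp add: endo_of_blinfun_inverse bounded_linear_Blinfun_apply)

lemma tendsto_endo_apply: "(F \<longlongrightarrow> X) G \<Longrightarrow> ((\<lambda>n. endo_apply (F n) z) \<longlongrightarrow> endo_apply X z) G"
proof -
  have "bounded_linear (\<lambda>X. endo_apply X z)"
    by (rule bounded_linear_intro[where K="norm z"])
       (auto simp: mult.commute[of "norm z"] norm_endo_apply)
  then show "(F \<longlongrightarrow> X) G \<Longrightarrow> ((\<lambda>n. endo_apply (F n) z) \<longlongrightarrow> endo_apply X z) G"
    using bounded_linear.tendsto by blast
qed

section \<open>The binomial series of the square root\<close>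

definition sqrt_coeff :: "nat \<Rightarrow> real" where
  "sqrt_coeff n = ((1/2) gchoose n) * (-1) ^ n"

lemma sqrt_coeff_0 [simp]: "sqrt_coeff 0 = 1"
  by (simp add: sqrt_coeff_def)

lemma sqrt_coeff_nonpos:
  assumes "n \<ge> 1" shows "sqrt_coeff n \<le> 0"
proof -
  have sign: "(-1) ^ n * (\<Prod>i = 0..<n. (1/2::real) - of_nat i) \<le> 0" if "n \<ge> 1" for n
    using that
  proof (induction n rule: dec_induct)
    case (step n)
    have "(-1::real) ^ Suc n * (\<Prod>i = 0..<Suc n. 1/2 - of_nat i)
        = ((-1) ^ n * (\<Prod>i = 0..<n. 1/2 - of_nat i)) * (of_nat n - 1/2)"
      by (simp add: algebra_simps)
    also have "\<dots> \<le> 0" by (rule mult_nonpos_nonneg[OF step.IH]) (use step.hyps in simp)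
    finally show ?case .
  qed simp
  have "fact n * sqrt_coeff n = (-1) ^ n * (\<Prod>i = 0..<n. (1/2::real) - of_nat i)"
    unfolding sqrt_coeff_def by (simp add: gbinomial_mult_fact[symmetric] algebra_simps)
  with sign[OF assms] have "fact n * sqrt_coeff n \<le> 0" by simp
  then show ?thesis using fact_gt_zero[of n, where 'a=real] by (auto simp: mult_le_0_iff)
qed

lemma sum_sqrt_coeff_nonneg: "(\<Sum>k\<le>m. sqrt_coeff k) \<ge> 0"
proof -
  have sign: "(-1) ^ m * (\<Prod>i = 0..<m. (-1/2::real) - of_nat i) \<ge> 0" for m
  proof (induction m)
    case (Suc m)
    have "(-1::real) ^ Suc m * (\<Prod>i = 0..<Suc m. -1/2 - of_nat i)
        = ((-1) ^ m * (\<Prod>i = 0..<m. -1/2 - of_nat i)) * (1/2 + of_nat m)"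
      by (simp add: algebra_simps)
    also have "\<dots> \<ge> 0" using Suc by simp
    finally show ?case .
  qed simp
  have "(\<Sum>k\<le>m. sqrt_coeff k) = (-1) ^ m * ((1/2 - 1) gchoose m)"
    unfolding sqrt_coeff_def by (rule gbinomial_sum_lower_neg)
  then have "fact m * (\<Sum>k\<le>m. sqrt_coeff k) = (-1) ^ m * (\<Prod>i = 0..<m. (-1/2::real) - of_nat i)"
    by (simp add: gbinomial_mult_fact[symmetric] algebra_simps)
  with sign[of m] have "fact m * (\<Sum>k\<le>m. sqrt_coeff k) \<ge> 0" by simp
  then show ?thesis using fact_gt_zero[of m, where 'a=real] by (auto simp: zero_le_mult_iff)
qed

lemma sum_abs_sqrt_coeff_Suc_le: "(\<Sum>k<n. \<bar>sqrt_coeff (Suc k)\<bar>) \<le> 1"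
proof -
  have "(\<Sum>k<n. \<bar>sqrt_coeff (Suc k)\<bar>) = - (\<Sum>k<n. sqrt_coeff (Suc k))"
    using sqrt_coeff_nonpos by (simp add: sum_negf)
  also have "(\<Sum>k<n. sqrt_coeff (Suc k)) = (\<Sum>k\<le>n. sqrt_coeff k) - 1"
    unfolding lessThan_Suc_atMost[symmetric] sum.lessThan_Suc_shift by simp
  finally show ?thesis using sum_sqrt_coeff_nonneg[of n] by simp
qed

lemma summable_abs_sqrt_coeff_Suc: "summable (\<lambda>n. \<bar>sqrt_coeff (Suc n)\<bar>)"
  by (rule summableI_nonneg_bounded[where x=1]) (auto simp: sum_abs_sqrt_coeff_Suc_le)

lemma suminf_abs_sqrt_coeff_Suc_le: "(\<Sum>n. \<bar>sqrt_coeff (Suc n)\<bar>) \<le> 1"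
  by (rule suminf_le_const[OF summable_abs_sqrt_coeff_Suc]) (simp add: sum_abs_sqrt_coeff_Suc_le)

lemma summable_abs_sqrt_coeff: "summable (\<lambda>n. \<bar>sqrt_coeff n\<bar>)"
  using summable_abs_sqrt_coeff_Suc by (subst summable_Suc_iff[symmetric])

lemma sqrt_coeff_convolution:
  "(\<Sum>i\<le>k. sqrt_coeff i * sqrt_coeff (k - i)) = (if k = 0 then 1 else if k = 1 then -1 else 0)"
proof -
  have "(\<Sum>i\<le>k. sqrt_coeff i * sqrt_coeff (k - i))
      = (\<Sum>i\<le>k. ((1/2) gchoose i) * ((1/2) gchoose (k - i))) * (-1) ^ k"
    unfolding sqrt_coeff_def sum_distrib_right
    by (intro sum.cong refl) (auto simp: power_add[symmetric])
  also have "(\<Sum>i\<le>k. ((1/2::real) gchoose i) * ((1/2) gchoose (k - i))) = (1/2 + 1/2) gchoose k"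
    using gbinomial_Vandermonde[of "1/2::real" "1/2" k] by (simp add: atLeast0AtMost)
  also have "(1/2 + 1/2::real) gchoose k = of_nat (1 choose k)"
    by (simp add: binomial_gbinomial)
  finally show ?thesis
    by (cases k; cases "k - 1") (auto simp: binomial_eq_0)
qed

definition commute :: "'a::real_normed_vector endo \<Rightarrow> 'a endo \<Rightarrow> bool" where
  "commute X Y \<longleftrightarrow> X * Y = Y * X"

lemma commute_refl: "commute X X"
  and commute_one: "commute 1 Z"
  and commute_zero: "commute 0 Z"
  by (simp_all add: commute_def)

lemma commute_sym: "commute X Y \<Longrightarrow> commute Y X"
  and commute_add: "commute X Z \<Longrightarrow> commute Y Z \<Longrightarrow> commute (X + Y) Z"
  and commute_diff: "commute X Z \<Longrightarrow> commute Y Z \<Longrightarrow> commute (X - Y) Z"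
  and commute_scaleR: "commute X Z \<Longrightarrow> commute (r *\<^sub>R X) Z"
  by (simp_all add: commute_def algebra_simps)

lemma commute_mult: "commute X Z \<Longrightarrow> commute Y Z \<Longrightarrow> commute (X * Y) Z"
  unfolding commute_def by (metis mult.assoc)

lemma commute_power: "commute X Z \<Longrightarrow> commute (X ^ n) Z"
  by (induction n) (auto simp: commute_one commute_mult)

lemma commute_lim:
  fixes X :: "nat \<Rightarrow> 'a::real_normed_vector endo"
  assumes "X \<longlonglongrightarrow> X0" "\<And>n. commute (X n) Z"
  shows "commute X0 Z"
proof -
  have "(\<lambda>n. X n * Z) \<longlonglongrightarrow> X0 * Z" by (intro tendsto_intros assms)
  moreover have "(\<lambda>n. X n * Z) \<longlonglongrightarrow> Z * X0"
    using assms(2) unfolding commute_def by (simp, intro tendsto_intros assms)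
  ultimately show ?thesis unfolding commute_def using LIMSEQ_unique by blast
qed

lemma norm_power_endo_le_one: "norm (Y::'a::real_normed_vector endo) \<le> 1 \<Longrightarrow> norm (Y ^ n) \<le> 1"
proof (induction n)
  case 0 then show ?case by (simp add: norm_one_endo)
next
  case (Suc n)
  have "norm (Y ^ Suc n) \<le> norm Y * norm (Y ^ n)" by (simp add: norm_mult_ineq)
  also have "\<dots> \<le> 1" using Suc by (intro mult_le_one) auto
  finally show ?case .
qed

text \<open>Absolutely convergent for \<open>\<parallel>Y\<parallel> \<le> 1\<close>, since \<open>\<Sum> |sqrt_coeff n| = 2\<close>.\<close>

definition sqrt_one_minus :: "'a::banach endo \<Rightarrow> 'a endo" where
  "sqrt_one_minus Y = (\<Sum>n. sqrt_coeff n *\<^sub>R Y ^ n)"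

lemma summable_norm_sqrt_one_minus:
  "norm (Y::'a::banach endo) \<le> 1 \<Longrightarrow> summable (\<lambda>n. norm (sqrt_coeff n *\<^sub>R Y ^ n))"
  by (rule summable_comparison_test'[OF summable_abs_sqrt_coeff, of 0])
     (simp add: mult_left_le norm_power_endo_le_one)

lemma summable_sqrt_one_minus:
  "norm (Y::'a::banach endo) \<le> 1 \<Longrightarrow> summable (\<lambda>n. sqrt_coeff n *\<^sub>R Y ^ n)"
  by (rule summable_norm_cancel[OF summable_norm_sqrt_one_minus])

lemma sqrt_one_minus_square:
  assumes "norm (Y::'a::banach endo) \<le> 1"
  shows "sqrt_one_minus Y * sqrt_one_minus Y = 1 - Y"
proof -
  have "sqrt_one_minus Y * sqrt_one_minus Y
      = (\<Sum>k. \<Sum>i\<le>k. (sqrt_coeff i *\<^sub>R Y ^ i) * (sqrt_coeff (k - i) *\<^sub>R Y ^ (k - i)))"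
    unfolding sqrt_one_minus_def
    by (rule Cauchy_product[OF summable_norm_sqrt_one_minus[OF assms]
                               summable_norm_sqrt_one_minus[OF assms]])
  also have "\<dots> = (\<Sum>k. (\<Sum>i\<le>k. sqrt_coeff i * sqrt_coeff (k - i)) *\<^sub>R Y ^ k)"
    by (simp add: scaleR_sum_left power_add[symmetric] mult.commute)
  also have "\<dots> = (\<Sum>k. (if k = 0 then 1 else if k = 1 then -1 else 0) *\<^sub>R Y ^ k)"
    by (simp add: sqrt_coeff_convolution)
  also have "\<dots> = (\<Sum>k\<in>{0,1}. (if k = 0 then 1 else if k = 1 then -1 else 0) *\<^sub>R Y ^ k)"
    by (rule suminf_finite) auto
  also have "\<dots> = 1 - Y" by simp
  finally show ?thesis .
qed

lemma commute_sqrt_one_minus: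
  assumes "norm (Y::'a::banach endo) \<le> 1" and "commute Y Z"
  shows "commute (sqrt_one_minus Y) Z"
proof -
  have "commute (\<Sum>i<n. sqrt_coeff i *\<^sub>R Y ^ i) Z" for n
    by (induction n) (auto simp: commute_zero commute_add commute_scaleR commute_power assms(2))
  then show ?thesis
    unfolding sqrt_one_minus_def
    by (rule commute_lim[OF summable_LIMSEQ[OF summable_sqrt_one_minus[OF assms(1)]]])
qed

lemma norm_one_minus_sqrt_one_minus_le:
  assumes "norm (Y::'a::banach endo) \<le> 1"
  shows "norm (1 - sqrt_one_minus Y) \<le> 1"
proof -
  define f where "f = (\<lambda>n. sqrt_coeff n *\<^sub>R Y ^ n)"
  have sn: "summable (\<lambda>n. norm (f n))"
    unfolding f_def by (rule summable_norm_sqrt_one_minus[OF assms])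
  have sn1: "summable (\<lambda>n. norm (f (Suc n)))" using sn by (subst summable_Suc_iff)
  have "(\<Sum>n. f (Suc n)) = sqrt_one_minus Y - 1"
    unfolding suminf_split_head[OF summable_norm_cancel[OF sn]]
    by (simp add: f_def sqrt_one_minus_def)
  then have "norm (1 - sqrt_one_minus Y) = norm (\<Sum>n. f (Suc n))"
    by (simp add: norm_minus_commute)
  also have "\<dots> \<le> (\<Sum>n. norm (f (Suc n)))" by (rule summable_norm[OF sn1])
  also have "\<dots> \<le> (\<Sum>n. \<bar>sqrt_coeff (Suc n)\<bar>)"
    by (rule suminf_le[OF _ sn1 summable_abs_sqrt_coeff_Suc])
       (simp add: f_def mult_left_le norm_power_endo_le_one[OF assms] del: power_Suc)
  also have "\<dots> \<le> 1" by (rule suminf_abs_sqrt_coeff_Suc_le)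
  finally show ?thesis .
qed

section \<open>Positivity in a C*-algebra\<close>

locale cstar =
  fixes A :: "('a::{real_normed_algebra, banach}) cstar_ops"
  assumes cstar_algebra: "cstar_algebra A"
begin

abbreviation cmul where "cmul \<equiv> csc A"
abbreviation star where "star \<equiv> invol A"

lemma cmul_add: "cmul c (a + b) = cmul c a + cmul c b"
  and cmul_cmul: "cmul (c * d) a = cmul c (cmul d a)"
  and cmul_of_real: "cmul (complex_of_real r) a = r *\<^sub>R a"
  and norm_cmul: "norm (cmul c a) = cmod c * norm a"
  and cmul_mult_left: "cmul c (a * b) = cmul c a * b"
  and cmul_mult_right: "cmul c (a * b) = a * cmul c b"
  and star_add: "star (a + b) = star a + star b"
  and star_cmul: "star (cmul c a) = cmul (cnj c) (star a)"
  and star_mult: "star (a * b) = star b * star a"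
  and star_star [simp]: "star (star a) = a"
  and norm_star_mult_self: "norm (star a * a) = norm a ^ 2"
  using cstar_algebra[unfolded cstar_algebra_def] by auto

lemma cmul_scaleR: "cmul c (r *\<^sub>R a) = r *\<^sub>R cmul c a"
  by (metis cmul_cmul cmul_of_real mult.commute)

lemma star_scaleR: "star (r *\<^sub>R a) = r *\<^sub>R star a"
  by (metis cmul_of_real complex_cnj_complex_of_real star_cmul)

lemma bounded_linear_cmul: "bounded_linear (cmul c)"
  by (rule bounded_linear_intro[where K="cmod c"]) (simp_all add: cmul_add cmul_scaleR norm_cmul)

lemma norm_star_le: "norm a \<le> norm (star a)"
proof (cases "norm a = 0")
  case False
  have "norm a * norm a = norm (star a * a)" by (simp add: norm_star_mult_self power2_eq_square)
  also have "\<dots> \<le> norm (star a) * norm a" by (rule norm_mult_ineq)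
  finally show ?thesis using False by simp
qed simp

lemma norm_star [simp]: "norm (star a) = norm a"
  using norm_star_le[of a] norm_star_le[of "star a"] by simp

sublocale star: bounded_linear star
  by (rule bounded_linear_intro[where K=1]) (simp_all add: star_add star_scaleR)

lemma cmul_ii: "cmul \<i> (cmul \<i> a) = - a"
  by (metis cmul_cmul cmul_of_real complex_i_mult_minus complex_i_not_one i_squared
      of_real_1 of_real_minus scaleR_minus1_left)

lemma cmul_minus_ii: "cmul (- \<i>) a = - cmul \<i> a"
  by (metis cmul_cmul cmul_of_real mult_minus1 of_real_1 of_real_minus scaleR_minus1_left)

text \<open>\<open>A\<close> is studied through its left regular representation on the real Banach space \<open>A\<close>.
  Operators there are only real-linear; multiplication by \<open>\<i>\<close> is the operator \<open>imult\<close>,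
  and adjoints are taken for the \<open>A\<close>-valued form \<open>star z * w\<close>.\<close>

definition lmult :: "'a \<Rightarrow> 'a endo" where
  "lmult a = endo_of_fun (\<lambda>z. a * z)"

definition imult :: "'a endo" where
  "imult = endo_of_fun (cmul \<i>)"

lemma endo_apply_lmult [simp]: "endo_apply (lmult a) z = a * z"
  unfolding lmult_def by (simp add: endo_apply_endo_of_fun bounded_linear_mult_right)

lemma endo_apply_imult [simp]: "endo_apply imult z = cmul \<i> z"
  unfolding imult_def by (simp add: endo_apply_endo_of_fun bounded_linear_cmul)

lemma imult_square: "imult * imult = - 1"
  by (rule endo_eqI) (simp add: cmul_ii)

lemma commute_lmult_imult: "commute (lmult a) imult"
  unfolding commute_def by (rule endo_eqI) (simp add: cmul_mult_right)

lemma lmult_add: "lmult (a + b) = lmult a + lmult b"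
  by (rule endo_eqI) (simp add: distrib_right)

lemma lmult_mult: "lmult (a * b) = lmult a * lmult b"
  by (rule endo_eqI) (simp add: mult.assoc)

lemma norm_lmult: "norm (lmult a) = norm a"
proof (rule antisym)
  show "norm (lmult a) \<le> norm a"
    by (rule norm_endo_bound) (auto simp: norm_mult_ineq)
  show "norm a \<le> norm (lmult a)"
  proof (cases "norm a = 0")
    case False
    have "norm a * norm a = norm (endo_apply (lmult a) (star a))"
      using norm_star_mult_self[of "star a"] by (simp add: power2_eq_square)
    also have "\<dots> \<le> norm (lmult a) * norm a"
      using norm_endo_apply[of "lmult a" "star a"] by simp
    finally show ?thesis using False by simp
  qed simp
qed

definition adjoint_pair :: "'a endo \<Rightarrow> 'a endo \<Rightarrow> bool" where
  "adjoint_pair X Y \<longleftrightarrow> (\<forall>z w. star (endo_apply X z) * w = star z * endo_apply Y w)"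

definition self_adjoint :: "'a endo \<Rightarrow> bool" where
  "self_adjoint X \<longleftrightarrow> adjoint_pair X X"

lemma adjoint_pair_sym: "adjoint_pair X Y \<Longrightarrow> adjoint_pair Y X"
  unfolding adjoint_pair_def by (metis star_mult star_star)

lemma adjoint_pair_zero: "adjoint_pair 0 0"
  and adjoint_pair_one: "adjoint_pair 1 1"
  and adjoint_pair_lmult: "adjoint_pair (lmult a) (lmult (star a))"
  and adjoint_pair_imult: "adjoint_pair imult (- imult)"
  unfolding adjoint_pair_def
  by (simp_all add: star_mult mult.assoc star_cmul cmul_mult_left[symmetric] cmul_mult_right
      cmul_minus_ii)

lemma adjoint_pair_add: "adjoint_pair X X' \<Longrightarrow> adjoint_pair Y Y' \<Longrightarrow> adjoint_pair (X + Y) (X' + Y')"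
  and adjoint_pair_diff: "adjoint_pair X X' \<Longrightarrow> adjoint_pair Y Y' \<Longrightarrow> adjoint_pair (X - Y) (X' - Y')"
  and adjoint_pair_scaleR: "adjoint_pair X X' \<Longrightarrow> adjoint_pair (r *\<^sub>R X) (r *\<^sub>R X')"
  and adjoint_pair_mult: "adjoint_pair X X' \<Longrightarrow> adjoint_pair Y Y' \<Longrightarrow> adjoint_pair (X * Y) (Y' * X')"
  unfolding adjoint_pair_def
  by (simp_all add: star_add star.diff star_scaleR distrib_right distrib_left
      left_diff_distrib right_diff_distrib)

lemma adjoint_pair_power:
  assumes "adjoint_pair X X'" shows "adjoint_pair (X ^ n) (X' ^ n)"
proof (induction n)
  case (Suc n)
  have "adjoint_pair (X * X ^ n) (X' ^ n * X')" by (rule adjoint_pair_mult[OF assms Suc.IH])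
  then show ?case by (simp add: power_commutes)
qed (simp add: adjoint_pair_one)

lemma adjoint_pair_lim:
  assumes "X \<longlonglongrightarrow> X0" "Y \<longlonglongrightarrow> Y0" "\<And>n. adjoint_pair (X n) (Y n)"
  shows "adjoint_pair X0 Y0"
  unfolding adjoint_pair_def
proof (intro allI)
  fix z w
  have "(\<lambda>n. star (endo_apply (X n) z) * w) \<longlonglongrightarrow> star (endo_apply X0 z) * w"
    by (intro tendsto_intros star.tendsto tendsto_endo_apply assms)
  moreover have "(\<lambda>n. star (endo_apply (X n) z) * w) \<longlonglongrightarrow> star z * endo_apply Y0 w"
    using assms(3) unfolding adjoint_pair_def by (simp, intro tendsto_intros tendsto_endo_apply assms)
  ultimately show "star (endo_apply X0 z) * w = star z * endo_apply Y0 w"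
    using LIMSEQ_unique by blast
qed

lemma self_adjoint_mult:
  "self_adjoint X \<Longrightarrow> self_adjoint Y \<Longrightarrow> commute X Y \<Longrightarrow> self_adjoint (X * Y)"
  unfolding self_adjoint_def commute_def by (metis adjoint_pair_mult)

lemma self_adjoint_lmult: "star a = a \<Longrightarrow> self_adjoint (lmult a)"
  unfolding self_adjoint_def using adjoint_pair_lmult[of a] by simp

lemma norm_square_le_norm_adjoint_mult:
  assumes "adjoint_pair X Y"
  shows "norm X ^ 2 \<le> norm (Y * X)"
proof -
  have "norm (endo_apply X z) \<le> sqrt (norm (Y * X)) * norm z" for z
  proof -
    have "norm (endo_apply X z) ^ 2 = norm (star z * endo_apply (Y * X) z)"
      using assms by (simp add: norm_star_mult_self[symmetric] adjoint_pair_def)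
    also have "\<dots> \<le> norm z * norm (endo_apply (Y * X) z)"
      using norm_mult_ineq[of "star z"] by simp
    also have "\<dots> \<le> norm z * (norm (Y * X) * norm z)"
      by (intro mult_left_mono norm_endo_apply norm_ge_zero)
    also have "\<dots> = (sqrt (norm (Y * X)) * norm z) ^ 2"
      by (simp add: power_mult_distrib power2_eq_square)
    finally show ?thesis by (rule power2_le_imp_le) simp
  qed
  then have "norm X \<le> sqrt (norm (Y * X))" by (intro norm_endo_bound) auto
  then show ?thesis by (metis norm_ge_zero power_mono real_sqrt_ge_0_iff real_sqrt_pow2)
qed

lemma adjoint_pair_norm_le:
  assumes "adjoint_pair X Y" shows "norm X \<le> norm Y"
proof (cases "norm X = 0")
  case False
  have "norm X * norm X \<le> norm (Y * X)"
    using norm_square_le_norm_adjoint_mult[OF assms] by (simp add: power2_eq_square)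
  also have "\<dots> \<le> norm Y * norm X" by (rule norm_mult_ineq)
  finally show ?thesis using False by simp
qed simp

lemma adjoint_pair_norm_eq: "adjoint_pair X Y \<Longrightarrow> norm Y = norm X"
  by (meson adjoint_pair_norm_le adjoint_pair_sym antisym)

lemma norm_adjoint_mult:
  assumes "adjoint_pair X Y" shows "norm (Y * X) = norm X ^ 2"
proof (rule antisym)
  show "norm (Y * X) \<le> norm X ^ 2"
    using norm_mult_ineq[of Y X] adjoint_pair_norm_eq[OF assms] by (simp add: power2_eq_square)
  show "norm X ^ 2 \<le> norm (Y * X)" by (rule norm_square_le_norm_adjoint_mult[OF assms])
qed

lemma norm_self_adjoint_square: "self_adjoint X \<Longrightarrow> norm (X * X) = norm X ^ 2"
  unfolding self_adjoint_def by (rule norm_adjoint_mult)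

lemma self_adjoint_sqrt_one_minus:
  assumes "norm Y \<le> 1" and "self_adjoint Y"
  shows "self_adjoint (sqrt_one_minus Y)"
proof -
  note lim = summable_LIMSEQ[OF summable_sqrt_one_minus[OF assms(1)]]
  have "adjoint_pair (\<Sum>i<n. sqrt_coeff i *\<^sub>R Y ^ i) (\<Sum>i<n. sqrt_coeff i *\<^sub>R Y ^ i)" for n
    using assms(2) unfolding self_adjoint_def
    by (induction n) (auto simp: adjoint_pair_zero intro!: adjoint_pair_add adjoint_pair_scaleR adjoint_pair_power)
  then show ?thesis
    unfolding sqrt_one_minus_def self_adjoint_def by (rule adjoint_pair_lim[OF lim lim])
qed

text \<open>An operator is positive if it is self-adjoint, complex-linear and \<open>\<parallel>t - X\<parallel> \<le> t\<close> for
  some \<open>t \<ge> 0\<close>: a spectrum-free way of saying that its spectrum lies in \<open>[0, 2t]\<close>.\<close>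

definition pos_op :: "'a endo \<Rightarrow> bool" where
  "pos_op X \<longleftrightarrow> self_adjoint X \<and> commute X imult \<and> (\<exists>t\<ge>0. norm (t *\<^sub>R 1 - X) \<le> t)"

lemma pos_opD: "pos_op X \<Longrightarrow> self_adjoint X" "pos_op X \<Longrightarrow> commute X imult"
  unfolding pos_op_def by simp_all

lemma norm_square_le_norm_add_squares:
  assumes W: "self_adjoint W" "commute W imult" and V: "self_adjoint V" "commute V imult"
    and "commute W V"
  shows "norm W ^ 2 \<le> norm (W * W + V * V)"
proof -
  text \<open>\<open>W\<^sup>2 + V\<^sup>2 = x\<^sup>* x\<close> for \<open>x = W + \<i>V\<close>, and \<open>W\<close> is the mean of \<open>x\<close> and \<open>x\<^sup>*\<close>.\<close>
  define x where "x = W + imult * V"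
  define x' where "x' = W - imult * V"
  have "adjoint_pair (imult * V) (V * - imult)"
    using adjoint_pair_mult[OF adjoint_pair_imult] V(1) by (simp add: self_adjoint_def)
  moreover have "V * - imult = - (imult * V)" using V(2) by (simp add: commute_def)
  ultimately have x: "adjoint_pair x x'"
    using adjoint_pair_add W(1) unfolding x_def x'_def self_adjoint_def by fastforce
  have e1: "W * (imult * V) = imult * (W * V)"
    using W(2) by (simp add: commute_def mult.assoc[symmetric])
  have e2: "(imult * V) * W = imult * (W * V)"
    using \<open>commute W V\<close> by (simp add: commute_def mult.assoc)
  have e3: "(imult * V) * (imult * V) = - (V * V)"
  proof -
    have "(imult * V) * (imult * V) = imult * ((V * imult) * V)" by (simp add: mult.assoc)
    also have "\<dots> = (imult * imult) * (V * V)" using V(2) by (simp add: commute_def mult.assoc)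
    finally show ?thesis by (simp add: imult_square)
  qed
  have "x' * x = W * W - (imult * V) * (imult * V) + (W * (imult * V) - (imult * V) * W)"
    unfolding x_def x'_def by (simp add: algebra_simps)
  also have "\<dots> = W * W + V * V" by (simp only: e1 e2 e3) simp
  finally have "x' * x = W * W + V * V" .
  then have "norm x ^ 2 \<le> norm (W * W + V * V)"
    using norm_square_le_norm_adjoint_mult[OF x] by simp
  moreover have "norm W \<le> norm x"
  proof -
    have "x + x' = 2 *\<^sub>R W" unfolding x_def x'_def by (simp add: scaleR_2)
    then have "W = (1/2) *\<^sub>R (x + x')" by simp
    then have "norm W \<le> (1/2) * (norm x + norm x')" by (simp add: norm_triangle_ineq)
    then show ?thesis using adjoint_pair_norm_eq[OF x] by simp
  qed
  ultimately show ?thesis by (meson norm_ge_zero order_trans power_mono)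
qed

lemma norm_one_minus_square_le:
  assumes "self_adjoint s" "commute s imult" "norm s \<le> 1"
  shows "norm (1 - s * s) \<le> 1"
proof -
  define r where "r = sqrt_one_minus (s * s)"
  have n: "norm (s * s) \<le> 1"
    using norm_mult_ineq[of s s] mult_le_one[OF assms(3) norm_ge_zero assms(3)] by linarith
  have rr: "r * r = 1 - s * s" unfolding r_def by (rule sqrt_one_minus_square[OF n])
  have "self_adjoint r"
    unfolding r_def by (rule self_adjoint_sqrt_one_minus[OF n self_adjoint_mult[OF assms(1,1) commute_refl]])
  moreover have "commute r s" "commute r imult"
    unfolding r_def using n assms(2)
    by (auto intro!: commute_sqrt_one_minus commute_mult commute_refl)
  ultimately have "norm r ^ 2 \<le> norm (r * r + s * s)"
    using norm_square_le_norm_add_squares assms(1,2) by blast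
  also have "r * r + s * s = 1" by (simp add: rr)
  finally have "norm r ^ 2 \<le> 1" using norm_one_endo by (rule order_trans)
  moreover have "norm (1 - s * s) \<le> norm r ^ 2"
    using rr norm_mult_ineq[of r r] by (simp add: power2_eq_square)
  ultimately show ?thesis by simp
qed

lemma norm_scaled_one_minus_square_le:
  assumes "self_adjoint s" "commute s imult"
  shows "norm (norm s ^ 2 *\<^sub>R 1 - s * s) \<le> norm s ^ 2"
proof (cases "s = 0")
  case False
  define s' where "s' = (1 / norm s) *\<^sub>R s"
  have "norm (1 - s' * s') \<le> 1"
    using assms False unfolding s'_def self_adjoint_def
    by (intro norm_one_minus_square_le) (simp_all add: self_adjoint_def adjoint_pair_scaleR commute_scaleR)
  moreover have "norm s ^ 2 *\<^sub>R 1 - s * s = norm s ^ 2 *\<^sub>R (1 - s' * s')"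
    using False by (simp add: s'_def algebra_simps power2_eq_square)
  ultimately show ?thesis by (simp add: mult_left_le)
qed simp

lemma pos_op_square:
  assumes "self_adjoint s" "commute s imult"
  shows "pos_op (s * s)"
  unfolding pos_op_def using assms norm_scaled_one_minus_square_le[OF assms]
  by (intro conjI self_adjoint_mult commute_mult commute_refl exI[where x="norm s ^ 2"]) auto

lemma pos_op_add:
  assumes "pos_op X" "pos_op Y" shows "pos_op (X + Y)"
proof -
  obtain t1 t2 where t: "t1 \<ge> 0" "norm (t1 *\<^sub>R 1 - X) \<le> t1" "t2 \<ge> 0" "norm (t2 *\<^sub>R 1 - Y) \<le> t2"
    using assms by (auto simp: pos_op_def)
  have eq: "(t1 + t2) *\<^sub>R 1 - (X + Y) = (t1 *\<^sub>R 1 - X) + (t2 *\<^sub>R 1 - Y)"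
    by (simp add: algebra_simps)
  have "norm ((t1 + t2) *\<^sub>R 1 - (X + Y)) \<le> norm (t1 *\<^sub>R 1 - X) + norm (t2 *\<^sub>R 1 - Y)"
    unfolding eq by (rule norm_triangle_ineq)
  then have "norm ((t1 + t2) *\<^sub>R 1 - (X + Y)) \<le> t1 + t2" using t by linarith
  with t assms show ?thesis unfolding pos_op_def self_adjoint_def
    by (intro conjI exI[where x="t1 + t2"] adjoint_pair_add commute_add) auto
qed

lemma pos_op_scaleR:
  assumes "c \<ge> 0" "pos_op X" shows "pos_op (c *\<^sub>R X)"
proof -
  obtain t where t: "t \<ge> 0" "norm (t *\<^sub>R 1 - X) \<le> t" using assms(2) by (auto simp: pos_op_def)
  have "(c * t) *\<^sub>R 1 - c *\<^sub>R X = c *\<^sub>R (t *\<^sub>R 1 - X)" by (simp add: algebra_simps)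
  then have "norm ((c * t) *\<^sub>R 1 - c *\<^sub>R X) \<le> c * t"
    using t assms(1) by (simp add: mult_left_mono)
  with t assms show ?thesis unfolding pos_op_def self_adjoint_def
    by (intro conjI exI[where x="c * t"] adjoint_pair_scaleR commute_scaleR) auto
qed

lemma pos_op_sqrt:
  assumes "pos_op X"
  obtains W where "pos_op W" "W * W = X" "\<And>Z. commute X Z \<Longrightarrow> commute W Z"
proof -
  obtain t where t: "t \<ge> 0" "norm (t *\<^sub>R 1 - X) \<le> t" using assms by (auto simp: pos_op_def)
  show ?thesis
  proof (cases "t = 0")
    case True
    then have "X = 0" using t by simp
    then show ?thesis
      by (intro that[of 0]) (auto simp: pos_op_def self_adjoint_def adjoint_pair_zero commute_zero)
  next
    case False
    text \<open>\<open>\<surd>X = \<surd>t \<surd>(1 - Y)\<close> with \<open>Y = 1 - X/t\<close>, and \<open>\<parallel>Y\<parallel> \<le> 1\<close> by the choice of \<open>t\<close>.\<close>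
    then have tp: "t > 0" using t by simp
    define Y where "Y = 1 - (1/t) *\<^sub>R X"
    have "Y = (1/t) *\<^sub>R (t *\<^sub>R 1 - X)" using tp by (simp add: Y_def algebra_simps)
    then have nY: "norm Y \<le> 1" using t tp by (simp add: divide_le_eq_1)
    have sY: "self_adjoint Y"
      using pos_opD(1)[OF assms] unfolding Y_def self_adjoint_def
      by (intro adjoint_pair_diff adjoint_pair_one adjoint_pair_scaleR)
    have cY: "commute Y Z" if "commute X Z" for Z
      unfolding Y_def by (intro commute_diff commute_one commute_scaleR that)
    define W where "W = sqrt t *\<^sub>R sqrt_one_minus Y"
    have "W * W = t *\<^sub>R (1 - Y)" using tp by (simp add: W_def sqrt_one_minus_square[OF nY])
    also have "\<dots> = X" using tp by (simp add: Y_def)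
    finally have WW: "W * W = X" .
    have cW: "commute W Z" if "commute X Z" for Z
      unfolding W_def by (intro commute_scaleR commute_sqrt_one_minus[OF nY] cY that)
    have "sqrt t *\<^sub>R 1 - W = sqrt t *\<^sub>R (1 - sqrt_one_minus Y)"
      by (simp add: W_def scaleR_diff_right)
    then have "norm (sqrt t *\<^sub>R 1 - W) \<le> sqrt t"
      using mult_left_le[OF norm_one_minus_sqrt_one_minus_le[OF nY], of "sqrt t"] tp by simp
    moreover have "self_adjoint W"
      using self_adjoint_sqrt_one_minus[OF nY sY]
      unfolding W_def self_adjoint_def by (rule adjoint_pair_scaleR)
    ultimately have pW: "pos_op W"
      unfolding pos_op_def using cW[OF pos_opD(2)[OF assms]] tp
      by (intro conjI exI[where x="sqrt t"]) auto
    show ?thesis using that pW WW cW by blast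
  qed
qed

lemma pos_op_norm_le:
  assumes "pos_op X" "norm X \<le> t"
  shows "norm (t *\<^sub>R 1 - X) \<le> t"
proof -
  obtain W where W: "pos_op W" "W * W = X" by (rule pos_op_sqrt[OF assms(1)])
  have "norm (norm X *\<^sub>R 1 - X) \<le> norm X"
    using norm_scaled_one_minus_square_le[OF pos_opD[OF W(1)]] norm_self_adjoint_square[OF pos_opD(1)[OF W(1)]]
    by (simp add: W(2))
  moreover have "norm ((t - norm X) *\<^sub>R (1::'a endo)) \<le> t - norm X"
    using assms(2) mult_left_le[OF norm_one_endo, of "t - norm X"] by simp
  moreover have eq: "t *\<^sub>R 1 - X = (t - norm X) *\<^sub>R 1 + (norm X *\<^sub>R 1 - X)"
    by (simp add: algebra_simps)
  moreover have "norm (t *\<^sub>R 1 - X) \<le> norm ((t - norm X) *\<^sub>R (1::'a endo)) + norm (norm X *\<^sub>R 1 - X)"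
    unfolding eq by (rule norm_triangle_ineq)
  ultimately show ?thesis by linarith
qed

text \<open>Monotonicity of the norm on positive operators: with \<open>t = \<parallel>X + Y\<parallel>\<close>, both \<open>X\<close> and
  \<open>t - X\<close> are positive, and their square roots satisfy \<open>\<surd>X\<^sup>2 + \<surd>(t - X)\<^sup>2 = t\<close>.\<close>

lemma norm_le_norm_add_pos_op:
  assumes X: "pos_op X" and Y: "pos_op Y"
  shows "norm X \<le> norm (X + Y)"
proof -
  define t where "t = norm (X + Y)"
  have t: "t \<ge> 0" by (simp add: t_def)
  have XY: "pos_op (X + Y)" by (rule pos_op_add[OF X Y])
  have "norm (t *\<^sub>R 1 - (X + Y)) \<le> t" unfolding t_def by (rule pos_op_norm_le[OF XY]) simp
  moreover have "t *\<^sub>R 1 - (t *\<^sub>R 1 - (X + Y)) = X + Y" by simp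
  ultimately have "pos_op (t *\<^sub>R 1 - (X + Y))"
    using pos_opD[OF XY] t unfolding pos_op_def self_adjoint_def
    by (intro conjI exI[where x=t] adjoint_pair_diff adjoint_pair_scaleR adjoint_pair_one
        commute_diff commute_scaleR commute_one) (auto simp: t_def add.commute)
  from pos_op_add[OF this Y] have tX: "pos_op (t *\<^sub>R 1 - X)" by simp
  obtain W where W: "pos_op W" "W * W = X" "\<And>Z. commute X Z \<Longrightarrow> commute W Z"
    using pos_op_sqrt[OF X] by blast
  obtain V where V: "pos_op V" "V * V = t *\<^sub>R 1 - X" "\<And>Z. commute (t *\<^sub>R 1 - X) Z \<Longrightarrow> commute V Z"
    using pos_op_sqrt[OF tX] by blast
  have "commute X W" unfolding W(2)[symmetric] commute_def by (simp add: mult.assoc)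
  then have "commute V W"
    by (intro V(3) commute_diff commute_scaleR commute_one)
  then have "norm W ^ 2 \<le> norm (W * W + V * V)"
    using norm_square_le_norm_add_squares pos_opD W(1) V(1) commute_sym by blast
  also have "W * W + V * V = t *\<^sub>R 1" using W(2) V(2) by simp
  also have "norm (t *\<^sub>R (1::'a endo)) \<le> t" using t mult_left_le[OF norm_one_endo, of t] by simp
  finally have "norm W ^ 2 \<le> t" .
  moreover have "norm X \<le> norm W ^ 2" using W(2) norm_mult_ineq[of W W] by (simp add: power2_eq_square)
  ultimately show ?thesis by (simp add: t_def)
qed

lemma pos_op_cube:
  assumes "pos_op P" shows "pos_op (P * P * P)"
proof -
  obtain W where W: "pos_op W" "W * W = P" "\<And>Z. commute P Z \<Longrightarrow> commute W Z"
    using pos_op_sqrt[OF assms] by blast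
  have cWP: "commute W P" by (rule W(3)[OF commute_refl])
  have "P * P * P = (W * P) * (W * P)"
    using cWP by (simp add: W(2)[symmetric] commute_def mult.assoc)
  then show ?thesis
    using pos_opD[OF assms] pos_opD[OF W(1)] cWP
    by (simp add: pos_op_square self_adjoint_mult commute_mult)
qed

lemma self_adjoint_cube_eq_zero:
  assumes "self_adjoint V" "V * V * V = 0" shows "V = 0"
proof -
  have "norm (V * V) ^ 2 = norm (V * (V * V * V))"
    using norm_self_adjoint_square[OF self_adjoint_mult[OF assms(1,1) commute_refl]]
    by (simp add: mult.assoc)
  then have "norm (V * V) = 0" using assms(2) by simp
  then show ?thesis using norm_self_adjoint_square[OF assms(1)] by simp
qed

text \<open>If \<open>y\<^sup>* y = -K\<close> with \<open>K\<close> positive, then \<open>y y\<^sup>* = (h\<^sup>2 + k\<^sup>2)/2 + K\<close> for the real and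
  imaginary parts \<open>h = y + y\<^sup>*\<close>, \<open>k = \<i>(y - y\<^sup>*)\<close>.\<close>

lemma pos_op_mult_adjoint_if_neg:
  assumes y: "adjoint_pair y y'" "commute y imult" "commute y' imult"
    and K: "pos_op K" "y' * y = - K"
  shows "pos_op (y * y')"
proof -
  define h where "h = y + y'"
  define k where "k = imult * (y - y')"
  have y'y: "adjoint_pair y' y" by (rule adjoint_pair_sym[OF y(1)])
  have sh: "self_adjoint h"
    unfolding h_def self_adjoint_def using adjoint_pair_add[OF y(1) y'y] by (simp add: add.commute)
  have "adjoint_pair k ((y' - y) * - imult)"
    unfolding k_def by (rule adjoint_pair_mult[OF adjoint_pair_imult adjoint_pair_diff[OF y(1) y'y]])
  moreover have "(y' - y) * - imult = k"
    using y(2,3) by (simp add: k_def commute_def algebra_simps)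
  ultimately have sk: "self_adjoint k" by (simp add: self_adjoint_def)
  have ch: "commute h imult" and ck: "commute k imult"
    unfolding h_def k_def using y(2,3) by (auto intro: commute_add commute_mult commute_refl commute_diff)
  have "k * k = imult * (((y - y') * imult) * (y - y'))" by (simp add: k_def mult.assoc)
  also have "\<dots> = imult * imult * ((y - y') * (y - y'))"
    using commute_diff[OF y(2,3)] by (simp add: commute_def mult.assoc)
  finally have "h * h + k * k = 2 *\<^sub>R (y * y' + y' * y)"
    by (simp add: h_def imult_square scaleR_2 algebra_simps)
  then have "y * y' = (1/2) *\<^sub>R (h * h + k * k + 2 *\<^sub>R K)"
    using K(2) by (simp add: algebra_simps)
  then show ?thesis
    by (simp add: pos_op_scaleR pos_op_add pos_op_square sh ch sk ck K(1))
qed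

text \<open>With \<open>N = \<parallel>y\<parallel>\<^sup>2 = \<parallel>K\<parallel> = \<parallel>P\<parallel>\<close> for \<open>P = y y\<^sup>*\<close>, the element \<open>Z = (N + P) y = y (N - K)\<close> has
  \<open>\<parallel>Z Z\<^sup>*\<parallel> \<le> N\<^sup>3\<close>, while \<open>Z Z\<^sup>* = 2N P\<^sup>2 + (N\<^sup>2P + P\<^sup>3)\<close> is a sum of positive operators whose first
  summand has norm \<open>2N\<^sup>3\<close>.\<close>

lemma adjoint_eq_zero_if_neg:
  assumes y: "adjoint_pair y y'" "commute y imult" "commute y' imult"
    and K: "pos_op K" "y' * y = - K"
  shows "y = 0"
proof -
  define P where "P = y * y'"
  define N where "N = norm y ^ 2"
  have N0: "N \<ge> 0" by (simp add: N_def)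
  have pP: "pos_op P" unfolding P_def by (rule pos_op_mult_adjoint_if_neg[OF y K])
  have nK: "norm K = N"
    using norm_adjoint_mult[OF y(1)] K(2) by (simp add: N_def)
  have nP: "norm P = N"
    using norm_adjoint_mult[OF adjoint_pair_sym[OF y(1)]] adjoint_pair_norm_eq[OF y(1)]
    by (simp add: N_def P_def)
  define Z where "Z = (N *\<^sub>R 1 + P) * y"
  define Z' where "Z' = y' * (N *\<^sub>R 1 + P)"
  have "norm Z \<le> norm y * norm (N *\<^sub>R 1 - K)"
    using norm_mult_ineq[of y "N *\<^sub>R 1 - K"] K(2)
    by (simp add: Z_def P_def algebra_simps)
  also have "\<dots> \<le> norm y * N"
    using pos_op_norm_le[OF K(1)] nK by (simp add: mult_left_mono)
  finally have nZ: "norm Z \<le> norm y * N" .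
  have "adjoint_pair (N *\<^sub>R 1 + P) (N *\<^sub>R 1 + P)"
    using pos_opD(1)[OF pP] unfolding self_adjoint_def
    by (intro adjoint_pair_add adjoint_pair_scaleR adjoint_pair_one)
  then have "adjoint_pair Z Z'" unfolding Z_def Z'_def by (rule adjoint_pair_mult[OF _ y(1)])
  then have "norm (Z * Z') \<le> norm Z ^ 2"
    using norm_mult_ineq[of Z Z'] adjoint_pair_norm_eq by (simp add: power2_eq_square)
  also have "\<dots> \<le> (norm y * N) ^ 2" by (intro power_mono nZ norm_ge_zero)
  also have "\<dots> = N * N * N" by (simp add: N_def power2_eq_square)
  finally have upper: "norm (Z * Z') \<le> N * N * N" .
  have "Z * Z' = (N *\<^sub>R 1 + P) * P * (N *\<^sub>R 1 + P)"
    by (simp add: Z_def Z'_def P_def mult.assoc)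
  also have "\<dots> = (N *\<^sub>R (P * P) + N *\<^sub>R (P * P)) + ((N * N) *\<^sub>R P + P * P * P)"
    by (simp add: algebra_simps)
  also have "N *\<^sub>R (P * P) + N *\<^sub>R (P * P) = (2 * N) *\<^sub>R (P * P)"
    by (metis scaleR_2 scaleR_scaleR)
  finally have ZZ: "Z * Z' = (2 * N) *\<^sub>R (P * P) + ((N * N) *\<^sub>R P + P * P * P)" .
  have "pos_op ((2 * N) *\<^sub>R (P * P))"
    using N0 by (intro pos_op_scaleR pos_op_square pos_opD[OF pP]) simp
  moreover have "pos_op ((N * N) *\<^sub>R P + P * P * P)"
    using N0 by (intro pos_op_add pos_op_scaleR pos_op_cube pP) simp
  ultimately have "norm ((2 * N) *\<^sub>R (P * P)) \<le> norm (Z * Z')"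
    unfolding ZZ by (rule norm_le_norm_add_pos_op)
  also have "norm ((2 * N) *\<^sub>R (P * P)) = 2 * N * (N * N)"
    using norm_self_adjoint_square[OF pos_opD(1)[OF pP]] nP N0 by (simp add: power2_eq_square)
  finally have "N * N * N \<le> 0" using upper by simp
  then have "N = 0" using N0 by (metis mult_nonneg_nonneg antisym mult_eq_0_iff)
  then show ?thesis by (simp add: N_def)
qed

text \<open>Positivity of \<open>b\<^sup>* b\<close> (Fukamiya, Kelley-Vaught): for \<open>H = b\<^sup>* b\<close> and \<open>V = |H| - H\<close>, the
  element \<open>y = b V\<close> satisfies \<open>y\<^sup>* y = V H V = -V |H| V\<close>, a negative operator, so \<open>y = 0\<close>;
  hence \<open>V\<^sup>3 = 2 V |H| V = 0\<close> and \<open>H = |H|\<close>.\<close>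

lemma pos_op_lmult_star_mult: "pos_op (lmult (star b * b))"
proof -
  define H where "H = lmult (star b * b)"
  have sH: "self_adjoint H" unfolding H_def by (rule self_adjoint_lmult) (simp add: star_mult)
  have cH: "commute H imult" unfolding H_def by (rule commute_lmult_imult)
  obtain X where X: "pos_op X" "X * X = H * H" "\<And>Z. commute (H * H) Z \<Longrightarrow> commute X Z"
    using pos_op_sqrt[OF pos_op_square[OF sH cH]] by blast
  have XH: "H * X = X * H"
    using X(3)[OF commute_mult[OF commute_refl commute_refl]] by (simp add: commute_def)
  define V where "V = X - H"
  have sV: "self_adjoint V"
    using pos_opD(1)[OF X(1)] sH unfolding V_def self_adjoint_def by (rule adjoint_pair_diff)
  have cV: "commute V imult" unfolding V_def by (intro commute_diff pos_opD(2)[OF X(1)] cH)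
  have XV: "X * V = H * H - X * H" using X(2) by (simp add: V_def algebra_simps)
  have VX: "V * X = X * V" using XH by (simp add: V_def algebra_simps)
  obtain R where R: "pos_op R" "R * R = X" "\<And>Z. commute X Z \<Longrightarrow> commute R Z"
    using pos_op_sqrt[OF X(1)] by blast
  have RV: "commute R V" using R(3) VX by (simp add: commute_def)
  define K where "K = V * (X * V)"
  have "K = (R * V) * (R * V)"
    using RV by (simp add: K_def R(2)[symmetric] commute_def mult.assoc)
  then have pK: "pos_op K"
    using pos_opD[OF R(1)] sV cV RV
    by (simp add: pos_op_square self_adjoint_mult commute_mult)
  define y where "y = lmult b * V"
  define y' where "y' = V * lmult (star b)"
  have "adjoint_pair y y'"
    unfolding y_def y'_def using adjoint_pair_mult[OF adjoint_pair_lmult] sV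
    by (simp add: self_adjoint_def)
  moreover have "commute y imult" "commute y' imult"
    unfolding y_def y'_def by (intro commute_mult commute_lmult_imult cV)+
  moreover have "y' * y = - K"
  proof -
    have "y' * y = V * (H * V)" by (simp add: y_def y'_def H_def lmult_mult mult.assoc)
    also have "H * V = - (X * V)" using XH XV by (simp add: V_def algebra_simps)
    finally show ?thesis by (simp add: K_def)
  qed
  ultimately have "y = 0" using adjoint_eq_zero_if_neg pK by blast
  then have "K = 0" using \<open>y' * y = - K\<close> by simp
  moreover have "V * V * V = 2 *\<^sub>R K"
  proof -
    have "V * V = X * X - X * H - H * X + H * H" by (simp add: V_def algebra_simps)
    also have "\<dots> = 2 *\<^sub>R (X * V)" using X(2) XH XV by (simp add: scaleR_2 algebra_simps)
    finally have "V * (V * V) = 2 *\<^sub>R K" by (simp add: K_def)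
    then show ?thesis by (simp add: mult.assoc)
  qed
  ultimately have "V = 0" using self_adjoint_cube_eq_zero[OF sV] by simp
  then show ?thesis using X(1) by (simp add: V_def H_def)
qed

lemma norm_star_mult_le_norm_add: "norm (star b * b) \<le> norm (star b * b + star c * c)"
  using norm_le_norm_add_pos_op[OF pos_op_lmult_star_mult pos_op_lmult_star_mult]
  by (simp add: norm_lmult lmult_add[symmetric])

section \<open>Hilbert modules\<close>

end

locale hilbert_mod = cstar A for A :: "('a::{real_normed_algebra, banach}) cstar_ops" +
  fixes H :: "('a, 'h::ab_group_add) hmod_ops"
  assumes hilbert_module: "hilbert_module A H"
begin

lemma hinner_add_left: "hinner H (x + y) z = hinner H x z + hinner H y z"
  using hilbert_module[unfolded hilbert_module_def] by meson

lemma hinner_hact_left: "hinner H (hact H a x) z = a * hinner H x z"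
  using hilbert_module[unfolded hilbert_module_def] by meson

lemma hinner_commute: "hinner H x y = star (hinner H y x)"
  using hilbert_module[unfolded hilbert_module_def] by meson

lemma hinner_self_positive: "cstar_positive A (hinner H x x)"
  using hilbert_module[unfolded hilbert_module_def] by meson

lemma hinner_self_eq_0: "hinner H x x = 0 \<Longrightarrow> x = 0"
  using hilbert_module[unfolded hilbert_module_def] by meson

lemma hinner_add_right: "hinner H z (x + y) = hinner H z x + hinner H z y"
  by (metis hinner_commute hinner_add_left star_add)

lemma hinner_diff_left: "hinner H (x - y) z = hinner H x z - hinner H y z"
  and hinner_diff_right: "hinner H z (x - y) = hinner H z x - hinner H z y"
  and hinner_sum_right: "hinner H z (\<Sum>s\<in>F. g s) = (\<Sum>s\<in>F. hinner H z (g s))"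
  using Modules.additive.diff[of "\<lambda>x. hinner H x z"]
    Modules.additive.diff[of "hinner H z"] Modules.additive.sum[of "hinner H z"]
  by (simp_all add: Modules.additive_def hinner_add_left hinner_add_right)

lemma hinner_hact_right: "hinner H z (hact H a x) = hinner H z x * star a"
  by (metis hinner_commute hinner_hact_left star_mult star_star)

lemma hinner_hspan_eq_0:
  assumes "\<forall>s\<in>S. hinner H u s = 0" and "x \<in> hspan H S"
  shows "hinner H u x = 0"
proof -
  obtain F c where F: "finite F" "F \<subseteq> S" "x = (\<Sum>s\<in>F. hact H (c s) s)"
    using assms(2) unfolding hspan_def by blast
  have "hinner H u x = (\<Sum>s\<in>F. hinner H u (hact H (c s) s))"
    unfolding F(3) by (rule hinner_sum_right)
  also have "\<dots> = 0" using F(2) assms(1) by (intro sum.neutral) (auto simp: hinner_hact_right)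
  finally show ?thesis .
qed

text \<open>For \<open>x\<close> in the span, \<open>\<langle>u - x, u - x\<rangle> = \<langle>u, u\<rangle> + \<langle>x, x\<rangle>\<close>, whose norm is at least \<open>\<parallel>u\<parallel>\<^sup>2\<close>
  by positivity of \<open>\<langle>x, x\<rangle>\<close>; so \<open>u\<close> stays at distance \<open>\<parallel>u\<parallel>\<close> from the span.\<close>

lemma orthogonal_dense_hspan_eq_0:
  assumes dense: "hdense H (hspan H S)" and orth: "\<forall>s\<in>S. hinner H u s = 0"
  shows "u = 0"
proof (rule ccontr)
  assume "u \<noteq> 0"
  then have "hnorm H u > 0" using hinner_self_eq_0 by (auto simp: hnorm_def)
  then obtain x where x: "x \<in> hspan H S" "hnorm H (u - x) < hnorm H u"
    using dense unfolding hdense_def by blast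
  have ux: "hinner H u x = 0" by (rule hinner_hspan_eq_0[OF orth x(1)])
  then have "hinner H x u = 0" by (simp add: hinner_commute[of x] star.zero)
  with ux have "hinner H (u - x) (u - x) = hinner H u u + hinner H x x"
    by (simp add: hinner_diff_left hinner_diff_right)
  moreover obtain b c where "hinner H u u = star b * b" "hinner H x x = star c * c"
    using hinner_self_positive by (meson cstar_positive_def)
  ultimately have "norm (hinner H u u) \<le> norm (hinner H (u - x) (u - x))"
    using norm_star_mult_le_norm_add[of b c] by simp
  then have "hnorm H u \<le> hnorm H (u - x)" by (simp add: hnorm_def)
  with x(2) show False by simp
qed

lemma orth_projection_range_fix: "orth_projection H P \<Longrightarrow> z \<in> range P \<Longrightarrow> P z = z"
  unfolding orth_projection_def by auto

lemma orth_projection_hinner: "orth_projection H P \<Longrightarrow> hinner H (P x) y = hinner H x (P y)"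
  unfolding orth_projection_def by auto

lemma orth_projection_eqI:
  assumes P: "orth_projection H P" and Q: "orth_projection H Q" and "range P = range Q"
  shows "P = Q"
proof
  fix x
  have QP: "Q (P y) = P y" and PQ: "P (Q y) = Q y" for y
    using orth_projection_range_fix[OF Q] orth_projection_range_fix[OF P] \<open>range P = range Q\<close>
    by (metis rangeI)+
  have "hinner H (P x) y = hinner H (Q x) y" for y
  proof -
    have "hinner H (P x) y = hinner H (Q (P x)) y" by (simp add: QP)
    also have "\<dots> = hinner H x (P (Q y))"
      by (simp add: orth_projection_hinner[OF P] orth_projection_hinner[OF Q])
    also have "\<dots> = hinner H (Q x) y" by (simp add: PQ orth_projection_hinner[OF Q])
    finally show ?thesis .
  qed
  then have "hinner H (P x - Q x) (P x - Q x) = 0"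
    by (simp add: hinner_diff_left)
  then show "P x = Q x" using hinner_self_eq_0 by fastforce
qed

text \<open>If \<open>T\<close> has an adjoint \<open>S\<close>, then \<open>z - S z\<close> is orthogonal to every \<open>f j\<close> for \<open>z \<in> range Q\<close>:
  \<open>\<langle>z, f j\<rangle> = \<langle>z, T (P (f j))\<rangle> = \<langle>S z, P (f j)\<rangle> = \<langle>S z, f j\<rangle>\<close>.\<close>

lemma range_subset_if_adj_op_maps_frame:
  assumes dense: "hdense H (hspan H (f ` J))"
    and P: "orth_projection H P" and Q: "orth_projection H Q"
    and T: "adj_op H (range P) (range Q) T" and Tf: "\<forall>j\<in>J. T (P (f j)) = Q (f j)"
  shows "range Q \<subseteq> range P"
proof
  fix z assume z: "z \<in> range Q"
  obtain S where S: "\<forall>y\<in>range Q. S y \<in> range P"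
      "\<forall>x\<in>range P. \<forall>y\<in>range Q. hinner H (T x) y = hinner H x (S y)"
    using T unfolding adj_op_def by blast
  have Sz: "S z \<in> range P" using S(1) z by blast
  have "hinner H (z - S z) (f j) = 0" if "j \<in> J" for j
  proof -
    have "hinner H z (f j) = hinner H (Q z) (f j)" by (simp add: orth_projection_range_fix[OF Q z])
    also have "\<dots> = hinner H z (T (P (f j)))" using Tf that by (simp add: orth_projection_hinner[OF Q])
    also have "\<dots> = star (hinner H (T (P (f j))) z)" by (rule hinner_commute)
    also have "\<dots> = star (hinner H (P (f j)) (S z))" using S(2) z by auto
    also have "\<dots> = hinner H (P (S z)) (f j)"
      by (simp add: orth_projection_hinner[OF P] hinner_commute[of "S z"])
    also have "\<dots> = hinner H (S z) (f j)" by (simp add: orth_projection_range_fix[OF P Sz])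
    finally show ?thesis by (simp add: hinner_diff_left)
  qed
  then have "z - S z = 0"
    using orthogonal_dense_hspan_eq_0[OF dense] by blast
  then show "z \<in> range P" using Sz by simp
qed

lemma range_subset_if_unitary_op_maps_frame:
  assumes dense: "hdense H (hspan H (f ` J))"
    and P: "orth_projection H P" and Q: "orth_projection H Q"
    and U: "unitary_op H (range P) (range Q) T" and Tf: "\<forall>j\<in>J. T (P (f j)) = Q (f j)"
  shows "range P \<subseteq> range Q"
proof
  fix x assume x: "x \<in> range P"
  have Tx: "T x \<in> range Q" using U x unfolding unitary_op_def adj_op_def by blast
  have "hinner H (x - T x) (f j) = 0" if "j \<in> J" for j
  proof -
    have "hinner H (T x) (f j) = hinner H (Q (T x)) (f j)"
      by (simp add: orth_projection_range_fix[OF Q Tx])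
    also have "\<dots> = hinner H (T x) (T (P (f j)))" using Tf that by (simp add: orth_projection_hinner[OF Q])
    also have "\<dots> = hinner H x (P (f j))" using U x unfolding unitary_op_def by blast
    also have "\<dots> = hinner H (P x) (f j)" by (simp add: orth_projection_hinner[OF P])
    also have "\<dots> = hinner H x (f j)" by (simp add: orth_projection_range_fix[OF P x])
    finally show ?thesis by (simp add: hinner_diff_left)
  qed
  then have "x - T x = 0"
    using orthogonal_dense_hspan_eq_0[OF dense] by blast
  then show "x \<in> range Q" using Tx by simp
qed

lemma eq_if_similar_frames:
  assumes dense: "hdense H (hspan H (f ` J))"
    and P: "orth_projection H P" and Q: "orth_projection H Q"
    and "similar_frames H (range P) (range Q) J (\<lambda>j. P (f j)) (\<lambda>j. Q (f j))"
  shows "P = Q"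
proof -
  obtain T S where T: "adj_op H (range P) (range Q) T" "\<forall>j\<in>J. T (P (f j)) = Q (f j)"
    and S: "adj_op H (range Q) (range P) S" "\<forall>x\<in>range P. S (T x) = x"
    using assms(4) unfolding similar_frames_def invertible_op_def by blast
  have "\<forall>j\<in>J. S (Q (f j)) = P (f j)" using T(2) S(2) by (metis rangeI)
  then have "range P \<subseteq> range Q" by (rule range_subset_if_adj_op_maps_frame[OF dense Q P S(1)])
  moreover have "range Q \<subseteq> range P" by (rule range_subset_if_adj_op_maps_frame[OF dense P Q T])
  ultimately show ?thesis by (intro orth_projection_eqI[OF P Q]) blast
qed

lemma eq_if_unitarily_equiv_frames:
  assumes dense: "hdense H (hspan H (f ` J))"
    and P: "orth_projection H P" and Q: "orth_projection H Q"
    and "unitarily_equiv_frames H (range P) (range Q) J (\<lambda>j. P (f j)) (\<lambda>j. Q (f j))"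
  shows "P = Q"
proof -
  obtain T where T: "unitary_op H (range P) (range Q) T" "\<forall>j\<in>J. T (P (f j)) = Q (f j)"
    using assms(4) unfolding unitarily_equiv_frames_def by blast
  have "adj_op H (range P) (range Q) T" using T(1) unfolding unitary_op_def by blast
  then have "range Q \<subseteq> range P" by (rule range_subset_if_adj_op_maps_frame[OF dense P Q _ T(2)])
  moreover have "range P \<subseteq> range Q" by (rule range_subset_if_unitary_op_maps_frame[OF dense P Q T])
  ultimately show ?thesis by (intro orth_projection_eqI[OF P Q]) blast
qed

end

lemma adj_op_id: "adj_op H M M id"
  unfolding adj_op_def by (auto intro!: exI[where x=1] exI[where x=id])

lemma similar_frames_refl: "similar_frames H M M J x x"
  unfolding similar_frames_def invertible_op_def using adj_op_id[of H M] by (auto intro!: exI[where x=id])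

lemma unitarily_equiv_frames_refl: "unitarily_equiv_frames H M M J x x"
  unfolding unitarily_equiv_frames_def unitary_op_def using adj_op_id[of H M] by auto

theorem proposition7p1:
  fixes A :: "('a::{real_normed_algebra, banach}) cstar_ops"
    and H :: "('a, 'h::ab_group_add) hmod_ops"
    and J :: "'j set" and f :: "'j \<Rightarrow> 'h"
    and P Q :: "'h \<Rightarrow> 'h"
  assumes "cstar_algebra A"
    and "hilbert_module A H"
    and "countably_generated H"
    and "hilbert_basis H J f"
    and "orthogonal_family H J f"
    and "orth_projection H P"
    and "orth_projection H Q"
    and "std_nt_frame H (range P) J (\<lambda>j. P (f j))"
    and "std_nt_frame H (range Q) J (\<lambda>j. Q (f j))"
  shows "(similar_frames H (range P) (range Q) J (\<lambda>j. P (f j)) (\<lambda>j. Q (f j)) \<longleftrightarrow>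
          unitarily_equiv_frames H (range P) (range Q) J (\<lambda>j. P (f j)) (\<lambda>j. Q (f j))) \<and>
         (unitarily_equiv_frames H (range P) (range Q) J (\<lambda>j. P (f j)) (\<lambda>j. Q (f j)) \<longleftrightarrow>
          (P = Q \<and> (\<forall>j\<in>J. P (f j) = Q (f j))))"
proof -
  interpret hilbert_mod A H
    by (intro hilbert_mod.intro cstar.intro hilbert_mod_axioms.intro assms(1,2))
  have dense: "hdense H (hspan H (f ` J))" using assms(4) by (simp add: hilbert_basis_def)
  show ?thesis
    using eq_if_similar_frames[OF dense assms(6,7)] eq_if_unitarily_equiv_frames[OF dense assms(6,7)]
      similar_frames_refl[of H "range P" J] unitarily_equiv_frames_refl[of H "range P" J]
    by auto
qed

end
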